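(* For all integers $n,m\ge 2$, the number $a(n,m,\Gamma_{sp})$ of single-peaked $(n,m)$-elections on the candidate set $\{c_1,\ldots,c_m\}$ satisfies $a(n,m,\Gamma_{sp})\le m!\cdot 4^{(m-1)(n-1)}$.
   Context: An $(n,m)$-election $(C,\mathcal{P})$ is a set $C$ of $m$ candidates with an ordered $n$-tuple $\mathcal{P}=(V_1,\ldots,V_n)$ of total orders (votes) on $C$. Given a total order $A$ on $C$ (an axis), a vote $V$ contains a valley with respect to $A$ on candidates $c_1,c_2,c_3$ if $c_2$ lies strictly between $c_1$ and $c_3$ in $A$ and $V$ ranks $c_2$ below both $c_1$ and $c_3$. The election is single-peaked with respect to $A$ if no vote contains a valley with respect to $A$, and single-peaked if it is single-peaked with respect to some total order $A$ on $C$. *)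

theory Defs
  imports Main
begin

text \<open>A total order on a finite candidate set C is represented by a list enumerating
  C without repetition; earlier positions are ranked higher (for votes) or lie further
  left (for axes).  "x before y in L" means x occurs strictly earlier than y in L.\<close>

definition total_order_on :: "'a set \<Rightarrow> 'a list \<Rightarrow> bool" where
  "total_order_on C L \<longleftrightarrow> distinct L \<and> set L = C"

definition before :: "'a list \<Rightarrow> 'a \<Rightarrow> 'a \<Rightarrow> bool" where
  "before L x y \<longleftrightarrow> (\<exists>i j. i < j \<and> j < length L \<and> L ! i = x \<and> L ! j = y)"

definition between :: "'a list \<Rightarrow> 'a \<Rightarrow> 'a \<Rightarrow> 'a \<Rightarrow> bool" where
  "between A c1 c2 c3 \<longleftrightarrow> (before A c1 c2 \<and> before A c2 c3) \<or> (before A c3 c2 \<and> before A c2 c1)"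

definition has_valley :: "'a list \<Rightarrow> 'a list \<Rightarrow> 'a \<Rightarrow> 'a \<Rightarrow> 'a \<Rightarrow> bool" where
  "has_valley A V c1 c2 c3 \<longleftrightarrow> between A c1 c2 c3 \<and> before V c1 c2 \<and> before V c3 c2"

definition single_peaked_wrt :: "'a list \<Rightarrow> 'a list list \<Rightarrow> bool" where
  "single_peaked_wrt A P \<longleftrightarrow> (\<forall>V \<in> set P. \<not> (\<exists>c1 c2 c3. has_valley A V c1 c2 c3))"

definition elections :: "'a set \<Rightarrow> nat \<Rightarrow> 'a list list set" where
  "elections C n = {P. length P = n \<and> (\<forall>V \<in> set P. total_order_on C V)}"

definition single_peaked :: "'a set \<Rightarrow> 'a list list \<Rightarrow> bool" where
  "single_peaked C P \<longleftrightarrow> (\<exists>A. total_order_on C A \<and> single_peaked_wrt A P)"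

definition num_single_peaked :: "nat \<Rightarrow> nat \<Rightarrow> nat" where
  "num_single_peaked n m = card {P \<in> elections {1..m} n. single_peaked {1..m} P}"

end

theory Submission
  imports Defs "HOL-Combinatorics.Multiset_Permutations"
begin

text \<open>In a vote that is single-peaked with respect to an axis, the last-ranked candidate is an
  endpoint of the axis: otherwise it would form a valley together with the two endpoints.
  Deleting it leaves a vote that is single-peaked with respect to the axis with that endpoint
  removed, so an axis of length k admits at most 2^(k-1) single-peaked votes.  Each
  single-peaked election is a list of n such votes for one of the m! axes, giving
  m! 2^((m-1)n) elections, and (m-1)n \<le> 2(m-1)(n-1) for n \<ge> 2.\<close>

definition single_peaked_vote :: "'a list \<Rightarrow> 'a list \<Rightarrow> bool" where
  "single_peaked_vote A V \<longleftrightarrow> \<not> (\<exists>c1 c2 c3. has_valley A V c1 c2 c3)"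

definition single_peaked_votes :: "'a list \<Rightarrow> 'a list set" where
  "single_peaked_votes A = {V. total_order_on (set A) V \<and> single_peaked_vote A V}"

lemma total_order_on_iff_permutations_of_set:
  "total_order_on C L \<longleftrightarrow> L \<in> permutations_of_set C"
  by (auto simp: total_order_on_def permutations_of_set_def)

lemma single_peaked_wrt_iff: "single_peaked_wrt A P \<longleftrightarrow> (\<forall>V \<in> set P. single_peaked_vote A V)"
  by (simp add: single_peaked_wrt_def single_peaked_vote_def)

lemma beforeI: "i < j \<Longrightarrow> j < length L \<Longrightarrow> before L (L ! i) (L ! j)"
  unfolding before_def by blast

lemma before_Cons: "before L x y \<Longrightarrow> before (z # L) x y"
  unfolding before_def by (metis Suc_mono length_Cons nth_Cons_Suc)

lemma before_append: "before L x y \<Longrightarrow> before (L @ M) x y"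
proof -
  assume "before L x y"
  then obtain i j where "i < j" "j < length L" "L ! i = x" "L ! j = y"
    unfolding before_def by blast
  then show ?thesis using beforeI[of i j "L @ M"] by (simp add: nth_append)
qed

lemma before_hd: "x \<in> set L \<Longrightarrow> x \<noteq> hd L \<Longrightarrow> before L (hd L) x"
proof -
  assume x: "x \<in> set L" "x \<noteq> hd L"
  then have "L \<noteq> []" by auto
  obtain j where "j < length L" "L ! j = x" using x by (auto simp: in_set_conv_nth)
  moreover have "j \<noteq> 0" using calculation x hd_conv_nth[OF \<open>L \<noteq> []\<close>] by metis
  ultimately show ?thesis using beforeI[of 0 j L] \<open>L \<noteq> []\<close> by (simp add: hd_conv_nth)
qed

lemma before_last: "x \<in> set L \<Longrightarrow> x \<noteq> last L \<Longrightarrow> before L x (last L)"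
proof -
  assume x: "x \<in> set L" "x \<noteq> last L"
  then have "L \<noteq> []" by auto
  obtain i where "i < length L" "L ! i = x" using x by (auto simp: in_set_conv_nth)
  moreover have "i \<noteq> length L - 1" using calculation x \<open>L \<noteq> []\<close> by (auto simp: last_conv_nth)
  ultimately show ?thesis using beforeI[of i "length L - 1" L] \<open>L \<noteq> []\<close> by (simp add: last_conv_nth)
qed

lemma single_peaked_vote_mono:
  assumes "single_peaked_vote A V"
    and "\<And>x y. before A' x y \<Longrightarrow> before A x y"
    and "\<And>x y. before V' x y \<Longrightarrow> before V x y"
  shows "single_peaked_vote A' V'"
  using assms unfolding single_peaked_vote_def has_valley_def between_def by meson

lemma last_of_single_peaked_vote:
  assumes "single_peaked_vote A V" "set V = set A" "V \<noteq> []"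
  shows "last V = hd A \<or> last V = last A"
proof (rule ccontr)
  assume interior: "\<not> (last V = hd A \<or> last V = last A)"
  have "A \<noteq> []" using assms(2,3) by auto
  then have ends: "hd A \<in> set V" "last A \<in> set V" using assms(2) by simp_all
  have "last V \<in> set A" using assms(2,3) last_in_set by blast
  then have "before A (hd A) (last V)" "before A (last V) (last A)"
    using interior before_hd before_last by metis+
  moreover have "before V (hd A) (last V)" "before V (last A) (last V)"
    using interior ends before_last by metis+
  ultimately have "has_valley A V (hd A) (last V) (last A)"
    by (simp add: has_valley_def between_def)
  then show False using assms(1) by (auto simp: single_peaked_vote_def)
qed

lemma single_peaked_votes_finite: "finite (single_peaked_votes A)"
  by (rule finite_subset[of _ "permutations_of_set (set A)"])
    (auto simp: single_peaked_votes_def total_order_on_iff_permutations_of_set)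

lemma single_peaked_votes_subset_remove_last:
  assumes "distinct A" "A \<noteq> []"
  shows "single_peaked_votes A \<subseteq>
    (\<lambda>W. W @ [hd A]) ` single_peaked_votes (tl A) \<union>
    (\<lambda>W. W @ [last A]) ` single_peaked_votes (butlast A)"
proof
  fix V assume "V \<in> single_peaked_votes A"
  then have V: "distinct V" "set V = set A" "single_peaked_vote A V"
    by (auto simp: single_peaked_votes_def total_order_on_def)
  then have "V \<noteq> []" using assms(2) by auto
  then obtain W x where V_eq: "V = W @ [x]" by (metis rev_exhaust)
  have W: "distinct W" "set W = set A - {x}" using V V_eq by auto
  have W_in: "W \<in> single_peaked_votes A'"
    if "set A' = set A - {x}" and "\<And>y z. before A' y z \<Longrightarrow> before A y z" for A'
  proof -
    have "before V y z" if "before W y z" for y z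
      using before_append[OF that, of "[x]"] V_eq by simp
    then have "single_peaked_vote A' W"
      using single_peaked_vote_mono[OF V(3) that(2)] by blast
    then show ?thesis using W that(1) by (simp add: single_peaked_votes_def total_order_on_def)
  qed
  have "x = hd A \<or> x = last A"
    using last_of_single_peaked_vote[OF V(3,2) \<open>V \<noteq> []\<close>] V_eq by simp
  then show "V \<in> (\<lambda>W. W @ [hd A]) ` single_peaked_votes (tl A) \<union>
      (\<lambda>W. W @ [last A]) ` single_peaked_votes (butlast A)"
  proof
    assume x: "x = hd A"
    have A_eq: "A = hd A # tl A" using assms(2) by simp
    have "set (tl A) = set A - {x}" using assms x by (cases A) auto
    moreover have "before A y z" if "before (tl A) y z" for y z
      using before_Cons[OF that, of "hd A"] by (simp only: A_eq[symmetric])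
    ultimately have "W \<in> single_peaked_votes (tl A)" by (rule W_in)
    then show ?thesis using V_eq x by blast
  next
    assume x: "x = last A"
    have A_eq: "A = butlast A @ [last A]" using assms(2) by simp
    have "distinct (butlast A @ [last A])" using assms(1) by (simp only: A_eq[symmetric])
    then have "set (butlast A) = set A - {x}" using x by (subst (2) A_eq) auto
    moreover have "before A y z" if "before (butlast A) y z" for y z
      using before_append[OF that, of "[last A]"] by (simp only: A_eq[symmetric])
    ultimately have "W \<in> single_peaked_votes (butlast A)" by (rule W_in)
    then show ?thesis using V_eq x by blast
  qed
qed

lemma card_single_peaked_votes_le:
  "distinct A \<Longrightarrow> card (single_peaked_votes A) \<le> 2 ^ (length A - 1)"
proof (induction A rule: length_induct)
  case (1 A)
  show ?case
  proof (cases "length A \<le> 1")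
    case True
    have "card (single_peaked_votes A) \<le> card (permutations_of_set (set A))"
      by (rule card_mono) (auto simp: single_peaked_votes_def total_order_on_iff_permutations_of_set)
    also have "\<dots> = fact (length A)" using "1.prems" by (simp add: distinct_card)
    also have "\<dots> = 2 ^ (length A - 1)" using True by (auto simp: le_Suc_eq)
    finally show ?thesis .
  next
    case False
    then have "A \<noteq> []" by auto
    have IH: "card (single_peaked_votes A') \<le> 2 ^ (length A - 2)"
      if "A' = tl A \<or> A' = butlast A" for A'
    proof -
      have "distinct A'" "length A' < length A" "length A' - 1 = length A - 2"
        using that "1.prems" \<open>A \<noteq> []\<close> by (auto simp: distinct_tl distinct_butlast)
      then show ?thesis using "1.IH" by metis
    qed
    have "card (single_peaked_votes A) \<le>
        card ((\<lambda>W. W @ [hd A]) ` single_peaked_votes (tl A) \<union>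
              (\<lambda>W. W @ [last A]) ` single_peaked_votes (butlast A))"
      by (rule card_mono[OF _ single_peaked_votes_subset_remove_last[OF "1.prems" \<open>A \<noteq> []\<close>]])
        (simp add: single_peaked_votes_finite)
    also have "\<dots> \<le> card (single_peaked_votes (tl A)) + card (single_peaked_votes (butlast A))"
      by (rule order_trans[OF card_Un_le add_mono[OF card_image_le card_image_le]])
        (simp_all add: single_peaked_votes_finite)
    also have "\<dots> \<le> 2 ^ (length A - 2) + 2 ^ (length A - 2)" using IH by (simp add: add_mono)
    also have "\<dots> = 2 ^ Suc (length A - 2)" by simp
    also have "\<dots> = 2 ^ (length A - 1)" using False by (simp add: Suc_diff_Suc numeral_2_eq_2)
    finally show ?thesis .
  qed
qed

lemma single_peaked_elections_subset:
  "{P \<in> elections C n. single_peaked C P} \<subseteq>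
    (\<Union>A \<in> permutations_of_set C. {P. set P \<subseteq> single_peaked_votes A \<and> length P = n})"
  by (auto simp: elections_def single_peaked_def single_peaked_wrt_iff single_peaked_votes_def
      total_order_on_iff_permutations_of_set permutations_of_set_def)

lemma card_single_peaked_elections_le:
  assumes "finite C"
  shows "card {P \<in> elections C n. single_peaked C P} \<le> fact (card C) * 2 ^ ((card C - 1) * n)"
proof -
  let ?Votes = "\<lambda>A. {P. set P \<subseteq> single_peaked_votes A \<and> length P = n}"
  have card_Votes: "card (?Votes A) \<le> 2 ^ ((card C - 1) * n)" if "A \<in> permutations_of_set C" for A
  proof -
    have "distinct A" "length A = card C"
      using that by (auto simp: permutations_of_set_def distinct_card)
    then have "card (single_peaked_votes A) \<le> 2 ^ (card C - 1)"
      using card_single_peaked_votes_le by metis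
    then show ?thesis
      by (simp add: card_lists_length_eq single_peaked_votes_finite power_mono power_mult)
  qed
  have "card {P \<in> elections C n. single_peaked C P} \<le> card (\<Union>A \<in> permutations_of_set C. ?Votes A)"
    by (rule card_mono[OF _ single_peaked_elections_subset])
      (auto intro!: finite_lists_length_eq single_peaked_votes_finite)
  also have "\<dots> \<le> (\<Sum>A \<in> permutations_of_set C. card (?Votes A))"
    by (rule card_UN_le) simp
  also have "\<dots> \<le> (\<Sum>A \<in> permutations_of_set C. 2 ^ ((card C - 1) * n))"
    by (rule sum_mono) (rule card_Votes)
  also have "\<dots> = fact (card C) * 2 ^ ((card C - 1) * n)"
    using assms by simp
  finally show ?thesis .
qed

theorem mainTheorem5:
  fixes n m :: nat
  assumes "n \<ge> 2" and "m \<ge> 2"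
  shows "num_single_peaked n m \<le> fact m * 4 ^ ((m - 1) * (n - 1))"
proof -
  have "n \<le> 2 * (n - 1)" using assms(1) by simp
  then have "(m - 1) * n \<le> 2 * ((m - 1) * (n - 1))"
    by (metis mult.left_commute mult_le_mono2)
  then have "(2::nat) ^ ((m - 1) * n) \<le> 2 ^ (2 * ((m - 1) * (n - 1)))"
    by (rule power_increasing) simp
  also have "\<dots> = 4 ^ ((m - 1) * (n - 1))"
    by (simp only: power_mult) simp
  finally have "fact m * 2 ^ ((m - 1) * n) \<le> fact m * (4::nat) ^ ((m - 1) * (n - 1))"
    by (rule mult_le_mono2)
  moreover have "num_single_peaked n m \<le> fact m * 2 ^ ((m - 1) * n)"
    using card_single_peaked_elections_le[of "{1..m}" n] by (simp add: num_single_peaked_def)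
  ultimately show ?thesis by (rule order_trans[rotated])
qed

end
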